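(* Let $E$ be an $S$-scaled vector space and $u:E\to E$ a $1$-bounded $\tau$-morphism. For every $s\in]0,\tau[$ satisfying $\frac{3N_\tau^1(u)}{\tau-s}\le\frac12$ and every $x\in E_\tau$, one has: 1) $|(e^{-u}(\mathrm{Id}+u)-\mathrm{Id})x|_s\le\frac{36|x|_\tau}{(\tau-s)^2}N_\tau^1(u)^2$; 2) $|(e^{-u}(\mathrm{Id}+u)-\mathrm{Id})x|_s\le\frac{2|u(x)|_\tau}{\tau-s}N_\tau^1(u)$; 3) $|(e^{-u}-\mathrm{Id})x|_s\le\frac{6|x|_\tau}{\tau-s}N_\tau^1(u)$; 4) $|(e^{-u}-\mathrm{Id})x|_s\le 2|u(x)|_\tau$; 5) $|e^ux|_s\le 2|x|_\tau$.
   Context: An $S$-scaled vector space is $E=\bigcup_{s\in]0,S[}E_s$ where $(E_s)$ is a decreasing family of Banach spaces (norms $|\cdot|_s$) with inclusions $E_{s+\sigma}\subset E_s$ of norm $\le1$, with the direct-limit topology. A linear map $u:E\to E$ is a $\tau$-morphism if $u(E_{s'})\subset E_s$ continuously for all $s'\in]0,\tau]$, $s\in]0,s'[$; it is $1$-bounded if $|u(x)|_s\le C\sigma^{-1}|x|_{s+\sigma}$ for all $s\in]0,\tau[$, $\sigma\in]0,\tau-s]$, $x\in E_{s+\sigma}$, and $N_\tau^1(u)$ is the smallest such $C$. $e^{\pm u}:=\sum_{j\ge0}(\pm u)^j/j!$. In 2) and 4), $|y|_\tau$ is understood as $+\infty$ if $y\notin E_\tau$. *)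

theory Defs
  imports "HOL-Analysis.Analysis"
begin

text \<open>An S-scaled vector space inside an ambient real vector space 'a:
  Es s is the Banach space E_s (for 0 < s < S), with norm nm s.\<close>

definition scaled_space :: "real \<Rightarrow> (real \<Rightarrow> 'a::real_vector set) \<Rightarrow> (real \<Rightarrow> 'a \<Rightarrow> real) \<Rightarrow> bool" where
  "scaled_space S Es nm \<longleftrightarrow> S > 0 \<and>
     (\<forall>s\<in>{0<..<S}.
        0 \<in> Es s \<and>
        (\<forall>x\<in>Es s. \<forall>y\<in>Es s. x + y \<in> Es s) \<and>
        (\<forall>c. \<forall>x\<in>Es s. c *\<^sub>R x \<in> Es s) \<and>
        (\<forall>x\<in>Es s. nm s x \<ge> 0 \<and> (nm s x = 0 \<longleftrightarrow> x = 0)) \<and>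
        (\<forall>c. \<forall>x\<in>Es s. nm s (c *\<^sub>R x) = \<bar>c\<bar> * nm s x) \<and>
        (\<forall>x\<in>Es s. \<forall>y\<in>Es s. nm s (x + y) \<le> nm s x + nm s y) \<and>
        (\<forall>X. (\<forall>n. X n \<in> Es s) \<longrightarrow>
              (\<forall>e>0. \<exists>N. \<forall>m\<ge>N. \<forall>n\<ge>N. nm s (X m - X n) < e) \<longrightarrow>
              (\<exists>L\<in>Es s. (\<lambda>n. nm s (X n - L)) \<longlonglongrightarrow> 0))) \<and>
     (\<forall>s\<in>{0<..<S}. \<forall>s'\<in>{0<..<S}. s < s' \<longrightarrow>
        Es s' \<subseteq> Es s \<and> (\<forall>x\<in>Es s'. nm s x \<le> nm s' x))"

definition scaled_union :: "real \<Rightarrow> (real \<Rightarrow> 'a set) \<Rightarrow> 'a set" where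
  "scaled_union S Es = (\<Union>s\<in>{0<..<S}. Es s)"

definition tau_morphism :: "real \<Rightarrow> (real \<Rightarrow> 'a::real_vector set) \<Rightarrow> (real \<Rightarrow> 'a \<Rightarrow> real) \<Rightarrow> real \<Rightarrow> ('a \<Rightarrow> 'a) \<Rightarrow> bool" where
  "tau_morphism S Es nm \<tau> u \<longleftrightarrow>
     (\<forall>x\<in>scaled_union S Es. u x \<in> scaled_union S Es) \<and>
     (\<forall>x\<in>scaled_union S Es. \<forall>y\<in>scaled_union S Es. u (x + y) = u x + u y) \<and>
     (\<forall>c. \<forall>x\<in>scaled_union S Es. u (c *\<^sub>R x) = c *\<^sub>R u x) \<and>
     (\<forall>s'\<in>{0<..\<tau>}. \<forall>s\<in>{0<..<s'}. u ` Es s' \<subseteq> Es s \<and>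
        (\<exists>C. \<forall>x\<in>Es s'. nm s (u x) \<le> C * nm s' x))"

definition one_bound_const :: "(real \<Rightarrow> 'a set) \<Rightarrow> (real \<Rightarrow> 'a \<Rightarrow> real) \<Rightarrow> real \<Rightarrow> ('a \<Rightarrow> 'a) \<Rightarrow> real \<Rightarrow> bool" where
  "one_bound_const Es nm \<tau> u C \<longleftrightarrow> C \<ge> 0 \<and>
     (\<forall>s\<in>{0<..<\<tau>}. \<forall>\<sigma>\<in>{0<..\<tau> - s}. \<forall>x\<in>Es (s + \<sigma>). nm s (u x) \<le> C / \<sigma> * nm (s + \<sigma>) x)"

definition one_bounded :: "(real \<Rightarrow> 'a set) \<Rightarrow> (real \<Rightarrow> 'a \<Rightarrow> real) \<Rightarrow> real \<Rightarrow> ('a \<Rightarrow> 'a) \<Rightarrow> bool" where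
  "one_bounded Es nm \<tau> u \<longleftrightarrow> (\<exists>C. one_bound_const Es nm \<tau> u C)"

definition N1 :: "(real \<Rightarrow> 'a set) \<Rightarrow> (real \<Rightarrow> 'a \<Rightarrow> real) \<Rightarrow> real \<Rightarrow> ('a \<Rightarrow> 'a) \<Rightarrow> real" where
  "N1 Es nm \<tau> u = Inf {C. one_bound_const Es nm \<tau> u C}"

text \<open>exp_conv Es nm s u x y: the series sum_j u^j x / j! converges in E_s
  (all terms in E_s, convergence in the norm of E_s) to y \<in> E_s, i.e. y = e^u x.\<close>
definition exp_conv :: "(real \<Rightarrow> 'a::real_vector set) \<Rightarrow> (real \<Rightarrow> 'a \<Rightarrow> real) \<Rightarrow> real \<Rightarrow> ('a \<Rightarrow> 'a) \<Rightarrow> 'a \<Rightarrow> 'a \<Rightarrow> bool" where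
  "exp_conv Es nm s u x y \<longleftrightarrow> (\<forall>j. (u ^^ j) x \<in> Es s) \<and> y \<in> Es s \<and>
     (\<lambda>n. nm s ((\<Sum>j<n. inverse (fact j) *\<^sub>R (u ^^ j) x) - y)) \<longlonglongrightarrow> 0"

end

theory Submission
  imports Defs
begin

text \<open>Splitting \<open>]s, s']\<close> into \<open>j\<close> steps of equal weight and applying the 1-bound at each step
  gives the estimate \<open>|u^j z|_s \<le> (j N / (s' - s))^j |z|_s'\<close>. Since \<open>j^j \<le> 3^(j-1) j!\<close>, the
  \<open>j\<close>-th term of the exponential series is then at most \<open>q^j / 3 |z|_\<tau>\<close> with
  \<open>q = 3 N / (\<tau> - s) \<le> 1/2\<close>, so all series converge geometrically in the Banach space \<open>E_s\<close> and
  their deviations are at most twice the first relevant term. For \<open>e^-u (Id + u) - Id\<close> the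
  first-order terms cancel: the partial sums telescope to \<open>\<Sum>\<^sub>k (-1)^k k / (k+1)! u^(k+1) x\<close>,
  which starts with \<open>u^2 x\<close>.\<close>

lemma one_plus_pow_le_three_mult_pow:
  assumes "1 \<le> k" shows "(real k + 1) ^ k \<le> 3 * real k ^ k"
proof -
  have k: "real k > 0" using assms by simp
  have "(1 + 1 / real k) ^ k \<le> exp (1 / real k) ^ k"
    by (rule power_mono) (auto intro: order_trans[OF _ exp_ge_add_one_self])
  also have "\<dots> = exp 1" using k by (simp flip: exp_of_nat_mult)
  also have "\<dots> \<le> 3" by (rule exp_le)
  finally have "(1 + 1 / real k) ^ k \<le> 3" .
  moreover have "(real k + 1) ^ k = real k ^ k * (1 + 1 / real k) ^ k"
    using k by (simp add: power_mult_distrib[symmetric] field_simps)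
  ultimately show ?thesis using k by simp
qed

lemma pow_self_le_three_pow_mult_fact:
  assumes "1 \<le> k" shows "real k ^ k \<le> 3 ^ (k - 1) * fact k"
  using assms
proof (induction k rule: dec_induct)
  case base then show ?case by simp
next
  case (step k)
  have "real (Suc k) ^ Suc k = (real k + 1) * (real k + 1) ^ k" by (simp add: add.commute)
  also have "\<dots> \<le> (real k + 1) * (3 * real k ^ k)"
    using one_plus_pow_le_three_mult_pow[OF step(1)] by (intro mult_left_mono) auto
  also have "\<dots> \<le> (real k + 1) * (3 * (3 ^ (k - 1) * fact k))"
    using step(3) by (intro mult_left_mono) auto
  also have "\<dots> = 3 ^ (Suc k - 1) * fact (Suc k)"
    using step(1) by (cases k) (auto simp: algebra_simps)
  finally show ?case .
qed

lemma geometric_sum_le_two: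
  fixes q :: real assumes "0 \<le> q" "q \<le> 1/2"
  shows "(\<Sum>k<n. q ^ k) \<le> 2"
proof -
  have "(\<Sum>k<n. q ^ k) = (1 - q ^ n) / (1 - q)" using assms by (simp add: sum_gp_strict)
  also have "\<dots> \<le> 1 / (1 - q)" using assms by (intro divide_right_mono) auto
  also have "\<dots> \<le> 2" using assms by (simp add: field_simps)
  finally show ?thesis .
qed

lemma weighted_geometric_sum_closed_form:
  fixes q :: real
  shows "(\<Sum>k<n. real k * q ^ k) * (1 - q)\<^sup>2 = q - real n * q ^ n + (real n - 1) * q ^ (n + 1)"
  by (induction n) (simp_all add: power2_eq_square algebra_simps)

lemma weighted_geometric_sum_le:
  fixes q :: real assumes "0 \<le> q" "q \<le> 1/2"
  shows "(\<Sum>k<n. real k * q ^ k) \<le> 4 * q"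
proof -
  have "(real n - 1) * q ^ (n + 1) \<le> real n * q ^ n"
  proof -
    have "(real n - 1) * q ^ (n + 1) \<le> real n * q ^ (n + 1)" using assms by (intro mult_right_mono) auto
    also have "\<dots> \<le> real n * q ^ n" using assms by (intro mult_left_mono power_decreasing) auto
    finally show ?thesis .
  qed
  then have "(\<Sum>k<n. real k * q ^ k) * (1 - q)\<^sup>2 \<le> q"
    unfolding weighted_geometric_sum_closed_form by linarith
  moreover have "1/4 \<le> (1 - q)\<^sup>2"
    using power_mono[of "1/2" "1 - q" 2] assms by (simp add: power2_eq_square)
  moreover have "0 \<le> (\<Sum>k<n. real k * q ^ k)" using assms by (intro sum_nonneg) auto
  ultimately have "(\<Sum>k<n. real k * q ^ k) * (1/4) \<le> q"
    by (meson mult_left_mono order_trans)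
  then show ?thesis by simp
qed

lemma alternating_fact_sum_telescope:
  fixes w :: "nat \<Rightarrow> 'a::real_vector"
  shows "(\<Sum>j<Suc n. ((-1) ^ j / fact j) *\<^sub>R (w j + w (Suc j))) - w 0
     = (\<Sum>k<n. ((-1) ^ k * real k / fact (Suc k)) *\<^sub>R w (Suc k)) + ((-1) ^ n / fact n) *\<^sub>R w (Suc n)"
proof (induction n)
  case 0 then show ?case by simp
next
  case (Suc n)
  have coeff: "(-1) ^ n / fact n + (-1) ^ Suc n / fact (Suc n) = ((-1) ^ n * real n / fact (Suc n) :: real)"
    by (simp add: field_simps del: fact_Suc) (simp add: algebra_simps)
  have "(\<Sum>j<Suc (Suc n). ((-1) ^ j / fact j) *\<^sub>R (w j + w (Suc j))) - w 0
      = (\<Sum>k<n. ((-1) ^ k * real k / fact (Suc k)) *\<^sub>R w (Suc k))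
        + ((-1) ^ n / fact n + (-1) ^ Suc n / fact (Suc n)) *\<^sub>R w (Suc n)
        + ((-1) ^ Suc n / fact (Suc n)) *\<^sub>R w (Suc (Suc n))"
    using Suc by (simp add: scaleR_add_right scaleR_add_left algebra_simps)
  then show ?case unfolding coeff by simp
qed

locale complete_normed_subspace =
  fixes V :: "'a::real_vector set" and p :: "'a \<Rightarrow> real"
  assumes zero_mem: "0 \<in> V"
    and add_mem: "x \<in> V \<Longrightarrow> y \<in> V \<Longrightarrow> x + y \<in> V"
    and scaleR_mem: "x \<in> V \<Longrightarrow> c *\<^sub>R x \<in> V"
    and nonneg: "x \<in> V \<Longrightarrow> 0 \<le> p x"
    and zero [simp]: "p 0 = 0"
    and scaleR: "x \<in> V \<Longrightarrow> p (c *\<^sub>R x) = \<bar>c\<bar> * p x"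
    and triangle: "x \<in> V \<Longrightarrow> y \<in> V \<Longrightarrow> p (x + y) \<le> p x + p y"
    and complete: "(\<And>n. X n \<in> V) \<Longrightarrow> (\<And>e. 0 < e \<Longrightarrow> \<exists>M. \<forall>m\<ge>M. \<forall>n\<ge>M. p (X m - X n) < e)
      \<Longrightarrow> \<exists>L\<in>V. (\<lambda>n. p (X n - L)) \<longlonglongrightarrow> 0"
begin

lemma diff_mem: "x \<in> V \<Longrightarrow> y \<in> V \<Longrightarrow> x - y \<in> V"
  using add_mem[of x "(-1) *\<^sub>R y"] scaleR_mem[of y "-1"] by simp

lemma minus_commute: "x \<in> V \<Longrightarrow> y \<in> V \<Longrightarrow> p (x - y) = p (y - x)"
  using scaleR[of "y - x" "-1"] diff_mem[of y x] by simp

lemma sum_mem: "(\<And>i. i \<in> A \<Longrightarrow> f i \<in> V) \<Longrightarrow> sum f A \<in> V"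
  by (induction A rule: infinite_finite_induct) (auto simp: zero_mem add_mem)

lemma sum_le: "(\<And>i. i \<in> A \<Longrightarrow> f i \<in> V) \<Longrightarrow> p (sum f A) \<le> (\<Sum>i\<in>A. p (f i))"
proof (induction A rule: infinite_finite_induct)
  case (insert i A)
  have "p (sum f (insert i A)) \<le> p (f i) + p (sum f A)"
    using insert by (simp add: triangle sum_mem)
  then show ?case using insert by simp
qed simp_all

lemma geometric_sum_le:
  assumes "\<And>j. a j \<in> V" "\<And>j. p (a j) \<le> r ^ j * K" "0 \<le> r" "r \<le> 1/2"
  shows "p (\<Sum>j<n. a j) \<le> 2 * K"
proof -
  have K: "0 \<le> K" using nonneg[OF assms(1)] assms(2)[of 0] by (metis order_trans power_0 mult_1)
  have "p (\<Sum>j<n. a j) \<le> (\<Sum>j<n. p (a j))" using assms(1) by (rule sum_le)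
  also have "\<dots> \<le> (\<Sum>j<n. r ^ j) * K" unfolding sum_distrib_right using assms(2) by (rule sum_mono)
  also have "\<dots> \<le> 2 * K" using geometric_sum_le_two[OF assms(3,4)] K by (rule mult_right_mono)
  finally show ?thesis .
qed

lemma summable_majorant_limit:
  assumes a: "\<And>j. a j \<in> V" and b: "\<And>j. p (a j) \<le> b j" and "summable b"
  shows "\<exists>y\<in>V. (\<lambda>n. p ((\<Sum>j<n. a j) - y)) \<longlonglongrightarrow> 0"
proof (rule complete)
  show "(\<Sum>j<n. a j) \<in> V" for n using a by (rule sum_mem)
  fix e :: real assume "0 < e"
  then obtain M where M: "\<And>m n. M \<le> m \<Longrightarrow> norm (sum b {m..<n}) < e"
    using \<open>summable b\<close> unfolding summable_Cauchy by blast
  have ordered: "p ((\<Sum>j<m. a j) - (\<Sum>j<n. a j)) < e" if "M \<le> n" "n \<le> m" for m n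
  proof -
    have "p ((\<Sum>j<m. a j) - (\<Sum>j<n. a j)) = p (sum a {n..<m})"
      using sum_diff_nat_ivl[of 0 n m a] that by (simp add: atLeast0LessThan)
    also have "\<dots> \<le> (\<Sum>j\<in>{n..<m}. p (a j))" using a by (rule sum_le)
    also have "\<dots> \<le> sum b {n..<m}" using b by (rule sum_mono)
    also have "\<dots> < e" using M[of n m] that by simp
    finally show ?thesis .
  qed
  show "\<exists>M. \<forall>m\<ge>M. \<forall>n\<ge>M. p ((\<Sum>j<m. a j) - (\<Sum>j<n. a j)) < e"
    using ordered minus_commute[OF sum_mem sum_mem] a by (metis nle_le)
qed

lemma series_limit_dist_le:
  assumes a: "\<And>j. a j \<in> V" and "\<And>j. p (a j) \<le> b j" "summable b" and c: "c \<in> V"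
    and partial: "\<And>n. k \<le> n \<Longrightarrow> p ((\<Sum>j<n. a j) - c) \<le> B"
  shows "\<exists>y\<in>V. (\<lambda>n. p ((\<Sum>j<n. a j) - y)) \<longlonglongrightarrow> 0 \<and> p (y - c) \<le> B"
proof -
  obtain y where y: "y \<in> V" and lim: "(\<lambda>n. p ((\<Sum>j<n. a j) - y)) \<longlonglongrightarrow> 0"
    using summable_majorant_limit assms by blast
  have "p (y - c) \<le> p ((\<Sum>j<n. a j) - y) + B" if "k \<le> n" for n
  proof -
    have T: "(\<Sum>j<n. a j) \<in> V" using a by (rule sum_mem)
    have "p (y - c) \<le> p (y - (\<Sum>j<n. a j)) + p ((\<Sum>j<n. a j) - c)"
      using triangle[OF diff_mem[OF y T] diff_mem[OF T c]] by simp
    then show ?thesis using minus_commute[OF y T] partial[OF that] by simp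
  qed
  then have "p (y - c) \<le> 0 + B"
    using lim by (intro tendsto_le[OF trivial_limit_sequentially tendsto_add[OF lim tendsto_const]
        tendsto_const] eventually_sequentiallyI)
  then show ?thesis using y lim by auto
qed

lemma alternating_fact_sum_telescope_le:
  assumes w: "\<And>k. w k \<in> V"
  shows "p ((\<Sum>j<Suc n. ((-1) ^ j / fact j) *\<^sub>R (w j + w (Suc j))) - w 0)
    \<le> (\<Sum>k<n. real k * (p (w (Suc k)) / fact (Suc k))) + real (Suc n) * (p (w (Suc n)) / fact (Suc n))"
proof -
  let ?c = "\<lambda>k. ((-1) ^ k * real k / fact (Suc k) :: real)"
  have fact_Suc_div: "1 / fact n = real (Suc n) / (fact (Suc n) :: real)" by simp
  have "p ((\<Sum>j<Suc n. ((-1) ^ j / fact j) *\<^sub>R (w j + w (Suc j))) - w 0)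
      \<le> p (\<Sum>k<n. ?c k *\<^sub>R w (Suc k)) + p (((-1) ^ n / fact n) *\<^sub>R w (Suc n))"
    unfolding alternating_fact_sum_telescope using w by (intro triangle sum_mem scaleR_mem)
  also have "\<dots> \<le> (\<Sum>k<n. p (?c k *\<^sub>R w (Suc k))) + p (((-1) ^ n / fact n) *\<^sub>R w (Suc n))"
    using w by (simp add: sum_le scaleR_mem)
  also have "\<dots> = (\<Sum>k<n. real k * (p (w (Suc k)) / fact (Suc k))) + real (Suc n) * (p (w (Suc n)) / fact (Suc n))"
    using w by (simp add: scaleR abs_mult power_abs fact_Suc_div del: fact_Suc)
  finally show ?thesis .
qed

end

lemma scaled_space_level:
  assumes "scaled_space S Es nm" "0 < s" "s < S"
  shows "complete_normed_subspace (Es s) (nm s)"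
proof -
  have "s \<in> {0<..<S}" using assms(2,3) by simp
  note level = bspec[OF assms(1)[unfolded scaled_space_def, THEN conjunct2, THEN conjunct1] this]
  show ?thesis
    by unfold_locales (use level in \<open>simp_all\<close>)
qed

lemma exp_conv_dist_le:
  assumes "complete_normed_subspace (Es s) (nm s)"
    and iterates: "\<And>j. (f ^^ j) x \<in> Es s" and "\<And>j. nm s ((f ^^ j) x) / fact j \<le> b j"
    and "summable b" "c \<in> Es s"
    and "\<And>n. k \<le> n \<Longrightarrow> nm s ((\<Sum>j<n. inverse (fact j) *\<^sub>R (f ^^ j) x) - c) \<le> B"
  shows "\<exists>y. exp_conv Es nm s f x y \<and> nm s (y - c) \<le> B"
proof -
  interpret complete_normed_subspace "Es s" "nm s" by fact
  have "nm s (inverse (fact j) *\<^sub>R (f ^^ j) x) \<le> b j" for j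
    using assms(3)[of j] iterates by (simp add: scaleR divide_inverse mult.commute)
  then obtain y where "y \<in> Es s" "(\<lambda>n. nm s ((\<Sum>j<n. inverse (fact j) *\<^sub>R (f ^^ j) x) - y)) \<longlonglongrightarrow> 0"
      "nm s (y - c) \<le> B"
    using series_limit_dist_le[where a = "\<lambda>j. inverse (fact j) *\<^sub>R (f ^^ j) x"] assms(4-6)
      iterates scaleR_mem by blast
  then show ?thesis using iterates unfolding exp_conv_def by blast
qed

lemma le_Inf_mult:
  fixes a b :: real and A :: "real set"
  assumes "A \<noteq> {}" "\<And>C. C \<in> A \<Longrightarrow> 0 \<le> C" "\<And>C. C \<in> A \<Longrightarrow> a \<le> C * b"
  shows "a \<le> Inf A * b"
proof (cases "0 < b")
  case True
  have "a / b \<le> Inf A" using assms True by (intro cInf_greatest) (auto simp: pos_divide_le_eq)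
  then show ?thesis using True by (simp add: pos_divide_le_eq)
next
  case False
  obtain C where C: "C \<in> A" using assms(1) by blast
  have "Inf A \<le> C" using C assms(2) by (intro cInf_lower) (auto simp: bdd_below_def)
  then have "C * b \<le> Inf A * b" using False by (intro mult_right_mono_neg) auto
  then show ?thesis using assms(3)[OF C] by linarith
qed

lemma one_bound_const_N1:
  assumes "one_bounded Es nm \<tau> u"
  shows "one_bound_const Es nm \<tau> u (N1 Es nm \<tau> u)"
proof -
  let ?A = "{C. one_bound_const Es nm \<tau> u C}"
  have ne: "?A \<noteq> {}" using assms unfolding one_bounded_def by blast
  have nonneg: "\<And>C. C \<in> ?A \<Longrightarrow> 0 \<le> C" by (simp add: one_bound_const_def)
  have "nm s (u x) \<le> Inf ?A * (nm (s + \<sigma>) x / \<sigma>)"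
    if "s \<in> {0<..<\<tau>}" "\<sigma> \<in> {0<..\<tau> - s}" "x \<in> Es (s + \<sigma>)" for s \<sigma> x
    using that by (intro le_Inf_mult[OF ne nonneg]) (auto simp: one_bound_const_def)
  moreover have "0 \<le> Inf ?A" using ne nonneg by (intro cInf_greatest) auto
  ultimately show ?thesis unfolding one_bound_const_def N1_def by simp
qed

locale one_bounded_morphism =
  fixes S \<tau> :: real and Es :: "real \<Rightarrow> 'a::real_vector set" and nm :: "real \<Rightarrow> 'a \<Rightarrow> real"
    and u :: "'a \<Rightarrow> 'a" and N :: real
  assumes scaled: "scaled_space S Es nm" and tau_pos: "0 < \<tau>" and tau_less: "\<tau> < S"
    and morphism: "tau_morphism S Es nm \<tau> u" and bound: "one_bound_const Es nm \<tau> u N"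
begin

lemma N_nonneg: "0 \<le> N"
  using bound unfolding one_bound_const_def by simp

lemma level: "0 < s \<Longrightarrow> s < S \<Longrightarrow> complete_normed_subspace (Es s) (nm s)"
  using scaled by (rule scaled_space_level)

lemma embedding:
  assumes "0 < s" "s < s'" "s' < S" "z \<in> Es s'"
  shows "z \<in> Es s" and "nm s z \<le> nm s' z"
proof -
  have "s \<in> {0<..<S}" "s' \<in> {0<..<S}" using assms by auto
  then have "Es s' \<subseteq> Es s \<and> (\<forall>x\<in>Es s'. nm s x \<le> nm s' x)"
    using scaled[unfolded scaled_space_def, THEN conjunct2, THEN conjunct2] assms(2) by blast
  then show "z \<in> Es s" "nm s z \<le> nm s' z" using assms(4) by auto
qed

lemma u_mem_norm_le:
  assumes "0 < s" "s < s'" "s' \<le> \<tau>" "z \<in> Es s'"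
  shows "u z \<in> Es s" and "nm s (u z) \<le> N / (s' - s) * nm s' z"
proof -
  have "s' \<in> {0<..\<tau>}" "s \<in> {0<..<s'}" using assms by auto
  then have "u ` Es s' \<subseteq> Es s"
    using morphism[unfolded tau_morphism_def, THEN conjunct2, THEN conjunct2, THEN conjunct2] by blast
  then show "u z \<in> Es s" using assms(4) by blast
  have "s \<in> {0<..<\<tau>}" "s' - s \<in> {0<..\<tau> - s}" "z \<in> Es (s + (s' - s))" using assms by auto
  then have "nm s (u z) \<le> N / (s' - s) * nm (s + (s' - s)) z"
    using bound unfolding one_bound_const_def by blast
  then show "nm s (u z) \<le> N / (s' - s) * nm s' z" by simp
qed

lemma iterate_mem_norm_le:
  assumes "0 < s" "s < s'" "s' \<le> \<tau>" "z \<in> Es s'"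
  shows "(u ^^ j) z \<in> Es s \<and> nm s ((u ^^ j) z) \<le> (real j * N / (s' - s)) ^ j * nm s' z"
  using assms(1,2)
proof (induction j arbitrary: s)
  case 0
  then show ?case using embedding[of s s' z] assms tau_less by simp
next
  case (Suc j)
  show ?case
  proof (cases "j = 0")
    case True
    then show ?thesis using u_mem_norm_le[of s s' z] Suc.prems assms by simp
  next
    case False
    define \<sigma> where "\<sigma> = s' - s"
    \<comment> \<open>Split at \<open>r\<close> so that the \<open>j\<close> steps above \<open>r\<close> and the last step below it carry the same
      factor \<open>(j + 1) N / \<sigma>\<close>.\<close>
    define r where "r = s + \<sigma> / (real j + 1)"
    have j: "1 \<le> real j" and \<sigma>: "0 < \<sigma>" using False Suc.prems unfolding \<sigma>_def by auto
    have r: "s < r" "r < s'" using \<sigma> j unfolding r_def \<sigma>_def by (auto simp: field_simps)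
    have upper: "real j * N / (s' - r) = (real j + 1) * N / \<sigma>"
      unfolding r_def \<sigma>_def using j \<sigma> by (simp add: field_simps \<sigma>_def)
    have lower: "N / (r - s) = (real j + 1) * N / \<sigma>"
      unfolding r_def by simp
    have IH: "(u ^^ j) z \<in> Es r" "nm r ((u ^^ j) z) \<le> (real j * N / (s' - r)) ^ j * nm s' z"
      using Suc.IH[of r] r Suc.prems by auto
    have "nm s ((u ^^ Suc j) z) \<le> N / (r - s) * nm r ((u ^^ j) z)"
      using u_mem_norm_le(2)[of s r] IH r Suc.prems assms by simp
    also have "\<dots> \<le> N / (r - s) * ((real j * N / (s' - r)) ^ j * nm s' z)"
      using IH N_nonneg r by (intro mult_left_mono) auto
    also have "\<dots> = (real (Suc j) * N / (s' - s)) ^ Suc j * nm s' z"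
      unfolding upper lower \<sigma>_def by (simp add: add.commute)
    finally show ?thesis using u_mem_norm_le(1)[of s r] IH r Suc.prems assms by simp
  qed
qed

lemma norm_tau_nonneg: "z \<in> Es \<tau> \<Longrightarrow> 0 \<le> nm \<tau> z"
  using complete_normed_subspace.nonneg[OF level] tau_pos tau_less by simp

lemma iterate_over_fact_le:
  assumes "0 < s" "s < \<tau>" "z \<in> Es \<tau>" "1 \<le> j"
  shows "nm s ((u ^^ j) z) / fact j \<le> (3 * N / (\<tau> - s)) ^ j / 3 * nm \<tau> z"
proof -
  let ?t = "N / (\<tau> - s)"
  have z: "0 \<le> nm \<tau> z" using norm_tau_nonneg assms(3) .
  have t: "0 \<le> ?t" using N_nonneg assms by simp
  have "nm s ((u ^^ j) z) \<le> (real j * N / (\<tau> - s)) ^ j * nm \<tau> z"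
    using iterate_mem_norm_le[of s \<tau> z j] assms by simp
  also have "\<dots> = real j ^ j * (?t ^ j * nm \<tau> z)" by (simp add: power_mult_distrib power_divide)
  also have "\<dots> \<le> 3 ^ (j - 1) * fact j * (?t ^ j * nm \<tau> z)"
    using pow_self_le_three_pow_mult_fact[OF assms(4)] t z by (intro mult_right_mono) auto
  also have "\<dots> = fact j * ((3 * ?t) ^ j / 3 * nm \<tau> z)"
  proof -
    have "(3 * c) ^ j / 3 = 3 ^ (j - 1) * c ^ j" for c :: real
      using assms(4) by (cases j) (simp_all add: power_mult_distrib)
    then show ?thesis by (metis mult.commute mult.left_commute)
  qed
  finally show ?thesis by (simp add: divide_le_eq mult.commute)
qed

lemma iterate_over_fact_le_power:
  assumes "0 < s" "s < \<tau>" "z \<in> Es \<tau>"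
  shows "nm s ((u ^^ j) z) / fact j \<le> (3 * N / (\<tau> - s)) ^ j * nm \<tau> z"
proof (cases j)
  case 0
  then show ?thesis using embedding(2)[of s \<tau> z] assms tau_less by simp
next
  case (Suc i)
  define c where "c = (3 * N / (\<tau> - s)) ^ j * nm \<tau> z"
  have "0 \<le> c"
    unfolding c_def using norm_tau_nonneg[OF assms(3)] N_nonneg assms by simp
  moreover have "nm s ((u ^^ j) z) / fact j \<le> c / 3"
    unfolding c_def using iterate_over_fact_le[of s z j] assms Suc by simp
  ultimately show ?thesis unfolding c_def by linarith
qed

lemma mem_union: "0 < s \<Longrightarrow> s < S \<Longrightarrow> z \<in> Es s \<Longrightarrow> z \<in> scaled_union S Es"
  unfolding scaled_union_def by auto

lemma iterate_mem_union: "z \<in> scaled_union S Es \<Longrightarrow> (u ^^ j) z \<in> scaled_union S Es"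
  using morphism unfolding tau_morphism_def by (induction j) auto

lemma iterate_uminus:
  assumes "z \<in> scaled_union S Es"
  shows "((\<lambda>z. - u z) ^^ j) z = (-1) ^ j *\<^sub>R (u ^^ j) z"
proof (induction j)
  case (Suc j)
  have "u ((-1) ^ j *\<^sub>R (u ^^ j) z) = (-1) ^ j *\<^sub>R u ((u ^^ j) z)"
    using morphism iterate_mem_union[OF assms] unfolding tau_morphism_def by blast
  then show ?case using Suc by simp
qed simp

lemma iterate_add:
  assumes "y \<in> scaled_union S Es" "z \<in> scaled_union S Es"
  shows "(u ^^ j) (y + z) = (u ^^ j) y + (u ^^ j) z"
proof (induction j)
  case (Suc j)
  have "u ((u ^^ j) y + (u ^^ j) z) = u ((u ^^ j) y) + u ((u ^^ j) z)"
    using morphism iterate_mem_union assms unfolding tau_morphism_def by blast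
  then show ?case using Suc by simp
qed simp

context
  fixes s :: real and x :: 'a
  assumes s_pos: "0 < s" and s_less: "s < \<tau>" and small: "3 * N / (\<tau> - s) \<le> 1 / 2"
    and x_mem: "x \<in> Es \<tau>"
begin

lemma s_level: "complete_normed_subspace (Es s) (nm s)"
  using level s_pos s_less tau_less by simp

lemma ratio_nonneg: "0 \<le> 3 * N / (\<tau> - s)"
  using N_nonneg s_less by simp

lemma summable_geometric_majorant: "summable (\<lambda>j. (3 * N / (\<tau> - s)) ^ j * c)"
proof (intro summable_mult2 summable_geometric)
  show "norm (3 * N / (\<tau> - s)) < 1"
    unfolding real_norm_def abs_of_nonneg[OF ratio_nonneg] using small by linarith
qed

lemma iterate_mem: "z \<in> Es \<tau> \<Longrightarrow> (u ^^ j) z \<in> Es s"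
  using iterate_mem_norm_le[of s \<tau> z j] s_pos s_less by simp

lemma exp_conv_norm_le: "\<exists>y. exp_conv Es nm s u x y \<and> nm s y \<le> 2 * nm \<tau> x"
proof -
  interpret complete_normed_subspace "Es s" "nm s" by (rule s_level)
  have bound: "nm s ((u ^^ j) x) / fact j \<le> (3 * N / (\<tau> - s)) ^ j * nm \<tau> x" for j
    by (rule iterate_over_fact_le_power[OF s_pos s_less x_mem])
  then have "nm s (inverse (fact j) *\<^sub>R (u ^^ j) x) \<le> (3 * N / (\<tau> - s)) ^ j * nm \<tau> x" for j
    using iterate_mem[OF x_mem] by (simp add: scaleR divide_inverse mult.commute)
  then have partial: "nm s (\<Sum>j<n. inverse (fact j) *\<^sub>R (u ^^ j) x) \<le> 2 * nm \<tau> x" for n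
    using geometric_sum_le[where a = "\<lambda>j. inverse (fact j) *\<^sub>R (u ^^ j) x", OF _ _ ratio_nonneg small]
      iterate_mem[OF x_mem] scaleR_mem by simp
  have "\<exists>y. exp_conv Es nm s u x y \<and> nm s (y - 0) \<le> 2 * nm \<tau> x"
    by (rule exp_conv_dist_le[where b = "\<lambda>j. (3 * N / (\<tau> - s)) ^ j * nm \<tau> x" and k = 0];
        simp add: s_level iterate_mem x_mem bound summable_geometric_majorant zero_mem partial)
  then show ?thesis by simp
qed

lemma exp_neg_conv_dist_le_geometric:
  assumes "\<And>j. nm s ((u ^^ Suc j) x) / fact (Suc j) \<le> (3 * N / (\<tau> - s)) ^ j * K"
  shows "\<exists>y. exp_conv Es nm s (\<lambda>z. - u z) x y \<and> nm s (y - x) \<le> 2 * K"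
proof -
  interpret complete_normed_subspace "Es s" "nm s" by (rule s_level)
  have x_union: "x \<in> scaled_union S Es" using mem_union tau_pos tau_less x_mem by simp
  have neg: "((\<lambda>z. - u z) ^^ j) x = (-1) ^ j *\<^sub>R (u ^^ j) x" for j
    by (rule iterate_uminus[OF x_union])
  let ?b = "\<lambda>j. ((-1) ^ j / fact j) *\<^sub>R (u ^^ j) x"
  have b_mem: "?b j \<in> Es s" for j using iterate_mem[OF x_mem] by (rule scaleR_mem)
  have partial: "(\<Sum>j<n. inverse (fact j) *\<^sub>R ((\<lambda>z. - u z) ^^ j) x) = (\<Sum>j<n. ?b j)" for n
    unfolding neg by (simp add: divide_inverse mult.commute)
  show ?thesis
  proof (rule exp_conv_dist_le[where b = "\<lambda>j. (3 * N / (\<tau> - s)) ^ j * nm \<tau> x" and k = 1])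
    show "complete_normed_subspace (Es s) (nm s)" by (rule s_level)
    show "summable (\<lambda>j. (3 * N / (\<tau> - s)) ^ j * nm \<tau> x)" by (rule summable_geometric_majorant)
    show "((\<lambda>z. - u z) ^^ j) x \<in> Es s" for j
      unfolding neg using iterate_mem[OF x_mem] by (rule scaleR_mem)
    show "nm s (((\<lambda>z. - u z) ^^ j) x) / fact j \<le> (3 * N / (\<tau> - s)) ^ j * nm \<tau> x" for j
      unfolding neg using iterate_over_fact_le_power[OF s_pos s_less x_mem] iterate_mem[OF x_mem]
      by (simp add: scaleR power_abs)
    show "x \<in> Es s" using iterate_mem[OF x_mem, of 0] by simp
    show "nm s ((\<Sum>j<n. inverse (fact j) *\<^sub>R ((\<lambda>z. - u z) ^^ j) x) - x) \<le> 2 * K" if n: "1 \<le> n" for n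
    proof -
      obtain k where k: "n = Suc k" using n by (cases n) auto
      have "(\<Sum>j<n. ?b j) - x = (\<Sum>j<k. ?b (Suc j))" unfolding k sum.lessThan_Suc_shift by simp
      moreover have "nm s (?b (Suc j)) \<le> (3 * N / (\<tau> - s)) ^ j * K" for j
        using assms[of j] unfolding scaleR[OF iterate_mem[OF x_mem]]
        by (simp add: power_abs del: fact_Suc funpow.simps)
      then have "nm s (\<Sum>j<k. ?b (Suc j)) \<le> 2 * K"
        using geometric_sum_le[where a = "\<lambda>j. ?b (Suc j)", OF b_mem _ ratio_nonneg small] by simp
      ultimately show ?thesis unfolding partial by simp
    qed
  qed
qed

lemma exp_neg_conv_dist_le:
  "\<exists>y. exp_conv Es nm s (\<lambda>z. - u z) x y \<and> nm s (y - x) \<le> 6 * nm \<tau> x / (\<tau> - s) * N"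
proof -
  have "nm s ((u ^^ Suc j) x) / fact (Suc j)
      \<le> (3 * N / (\<tau> - s)) ^ j * (3 * N / (\<tau> - s) * nm \<tau> x)" for j
    using iterate_over_fact_le_power[OF s_pos s_less x_mem, of "Suc j"] by (simp add: mult_ac)
  from exp_neg_conv_dist_le_geometric[OF this] show ?thesis by (simp add: mult_ac)
qed

lemma exp_neg_conv_dist_le_image:
  assumes ux: "u x \<in> Es \<tau>"
  shows "\<exists>y. exp_conv Es nm s (\<lambda>z. - u z) x y \<and> nm s (y - x) \<le> 2 * nm \<tau> (u x)"
proof (rule exp_neg_conv_dist_le_geometric)
  fix j
  have "nm s ((u ^^ Suc j) x) / fact (Suc j) \<le> nm s ((u ^^ j) (u x)) / fact j"
    using complete_normed_subspace.nonneg[OF s_level iterate_mem[OF ux]]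
    by (simp add: funpow_Suc_right frac_le fact_mono del: fact_Suc funpow.simps)
  also have "\<dots> \<le> (3 * N / (\<tau> - s)) ^ j * nm \<tau> (u x)"
    by (rule iterate_over_fact_le_power[OF s_pos s_less ux])
  finally show "nm s ((u ^^ Suc j) x) / fact (Suc j) \<le> (3 * N / (\<tau> - s)) ^ j * nm \<tau> (u x)" .
qed

text \<open>The hypothesis bounds the telescoped form of the partial sums of \<open>e^-u (x + u x) - x\<close>
  given by \<open>alternating_fact_sum_telescope_le\<close>.\<close>

lemma exp_neg_one_plus_conv_dist_le_partial:
  assumes partial: "\<And>n. k \<le> n \<Longrightarrow> (\<Sum>i<n. real i * (nm s ((u ^^ Suc i) x) / fact (Suc i)))
      + real (Suc n) * (nm s ((u ^^ Suc n) x) / fact (Suc n)) \<le> B"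
  shows "\<exists>y. exp_conv Es nm s (\<lambda>z. - u z) (x + u x) y \<and> nm s (y - x) \<le> B"
proof -
  interpret complete_normed_subspace "Es s" "nm s" by (rule s_level)
  define q where "q = 3 * N / (\<tau> - s)"
  define m where "m = nm \<tau> x"
  define v where "v j = (u ^^ j) x" for j
  have q: "0 \<le> q" "q \<le> 1/2" and m: "0 \<le> m"
    unfolding q_def m_def using ratio_nonneg small norm_tau_nonneg[OF x_mem] by auto
  have v_mem: "v j \<in> Es s" for j unfolding v_def by (rule iterate_mem[OF x_mem])
  have v_le: "nm s (v j) / fact j \<le> q ^ j * m" for j
    unfolding v_def q_def m_def by (rule iterate_over_fact_le_power[OF s_pos s_less x_mem])
  have neg: "((\<lambda>z. - u z) ^^ j) (x + u x) = (-1) ^ j *\<^sub>R (v j + v (Suc j))" for j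
  proof -
    have "x \<in> scaled_union S Es" "u x \<in> scaled_union S Es" "x + u x \<in> scaled_union S Es"
      using mem_union[of s] v_mem[of 0] v_mem[of 1] add_mem s_pos s_less tau_less
      unfolding v_def by auto
    then show ?thesis
      using iterate_uminus iterate_add unfolding v_def by (simp add: funpow_swap1)
  qed
  show ?thesis
  proof (rule exp_conv_dist_le[where b = "\<lambda>j. q ^ j * m + real (Suc j) * (q ^ Suc j * m)"
        and k = "Suc k"])
    show "complete_normed_subspace (Es s) (nm s)" by (rule s_level)
    show "((\<lambda>z. - u z) ^^ j) (x + u x) \<in> Es s" for j
      unfolding neg using v_mem by (intro scaleR_mem add_mem)
    show "x \<in> Es s" using v_mem[of 0] unfolding v_def by simp
    show "nm s (((\<lambda>z. - u z) ^^ j) (x + u x)) / fact j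
        \<le> q ^ j * m + real (Suc j) * (q ^ Suc j * m)" for j
    proof -
      have "nm s (((\<lambda>z. - u z) ^^ j) (x + u x)) / fact j \<le> (nm s (v j) + nm s (v (Suc j))) / fact j"
        unfolding neg using v_mem by (simp add: scaleR add_mem power_abs divide_right_mono triangle)
      also have "\<dots> = nm s (v j) / fact j + real (Suc j) * (nm s (v (Suc j)) / fact (Suc j))"
        by (simp add: add_divide_distrib)
      also have "\<dots> \<le> q ^ j * m + real (Suc j) * (q ^ Suc j * m)"
        by (intro add_mono mult_left_mono v_le) simp
      finally show ?thesis .
    qed
    show "summable (\<lambda>j. q ^ j * m + real (Suc j) * (q ^ Suc j * m))"
    proof (rule summable_add)
      show "summable (\<lambda>j. q ^ j * m)" using summable_geometric_majorant unfolding q_def .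
      have "(\<Sum>j<n. real (Suc j) * (q ^ Suc j * m)) = (\<Sum>i<Suc n. real i * q ^ i) * m" for n
        unfolding sum.lessThan_Suc_shift by (simp add: sum_distrib_left sum_distrib_right mult_ac)
      then have "(\<Sum>j<n. real (Suc j) * (q ^ Suc j * m)) \<le> 4 * q * m" for n
        using mult_right_mono[OF weighted_geometric_sum_le[OF q, of "Suc n"] m] by (simp only:)
      then show "summable (\<lambda>j. real (Suc j) * (q ^ Suc j * m))"
        using q m by (intro summableI_nonneg_bounded) auto
    qed
    show "nm s ((\<Sum>j<n. inverse (fact j) *\<^sub>R ((\<lambda>z. - u z) ^^ j) (x + u x)) - x) \<le> B"
      if n: "Suc k \<le> n" for n
    proof -
      obtain p where p: "n = Suc p" "k \<le> p" using n by (cases n) auto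
      have "x = v 0" unfolding v_def by simp
      then have "(\<Sum>j<n. inverse (fact j) *\<^sub>R ((\<lambda>z. - u z) ^^ j) (x + u x)) - x
          = (\<Sum>j<Suc p. ((-1) ^ j / fact j) *\<^sub>R (v j + v (Suc j))) - v 0"
        unfolding neg p(1) by (simp add: divide_inverse mult.commute)
      then have "nm s ((\<Sum>j<n. inverse (fact j) *\<^sub>R ((\<lambda>z. - u z) ^^ j) (x + u x)) - x)
          \<le> (\<Sum>i<p. real i * (nm s (v (Suc i)) / fact (Suc i)))
            + real (Suc p) * (nm s (v (Suc p)) / fact (Suc p))"
        using alternating_fact_sum_telescope_le[where w = v and n = p] v_mem by simp
      then show ?thesis using partial[OF p(2)] unfolding v_def by linarith
    qed
  qed
qed

lemma exp_neg_one_plus_conv_dist_le: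
  "\<exists>y. exp_conv Es nm s (\<lambda>z. - u z) (x + u x) y \<and> nm s (y - x) \<le> 36 * nm \<tau> x / (\<tau> - s)^2 * N^2"
proof -
  define q where "q = 3 * N / (\<tau> - s)"
  define m where "m = nm \<tau> x"
  have q: "0 \<le> q" "q \<le> 1/2" and m: "0 \<le> m"
    unfolding q_def m_def using ratio_nonneg small norm_tau_nonneg[OF x_mem] by auto
  have d: "nm s ((u ^^ Suc i) x) / fact (Suc i) \<le> q ^ Suc i / 3 * m" for i
    unfolding q_def m_def by (rule iterate_over_fact_le[OF s_pos s_less x_mem]) simp
  have "(\<Sum>i<n. real i * (nm s ((u ^^ Suc i) x) / fact (Suc i)))
      + real (Suc n) * (nm s ((u ^^ Suc n) x) / fact (Suc n)) \<le> 36 * m / (\<tau> - s)^2 * N^2"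
    if n: "1 \<le> n" for n
  proof -
    have "(\<Sum>i<n. real i * (nm s ((u ^^ Suc i) x) / fact (Suc i)))
        + real (Suc n) * (nm s ((u ^^ Suc n) x) / fact (Suc n))
        \<le> (\<Sum>i<n. real i * (q ^ Suc i / 3 * m)) + real (Suc n) * (q ^ Suc n / 3 * m)"
      using d by (intro add_mono sum_mono mult_left_mono) auto
    also have "\<dots> = (q * (\<Sum>i<Suc n. real i * q ^ i) + q ^ Suc n) * m / 3"
      by (simp add: sum_distrib_left sum_distrib_right sum_divide_distrib algebra_simps)
    also have "\<dots> \<le> (q * (4 * q) + q ^ 2) * m / 3"
    proof -
      have "q ^ Suc n \<le> q ^ 2" using n q by (intro power_decreasing) auto
      moreover have "q * (\<Sum>i<Suc n. real i * q ^ i) \<le> q * (4 * q)"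
        using mult_left_mono[OF weighted_geometric_sum_le[OF q, of "Suc n"] q(1)] .
      ultimately show ?thesis using m by (intro divide_right_mono mult_right_mono) auto
    qed
    also have "\<dots> \<le> 4 * q ^ 2 * m" using m q by (simp add: power2_eq_square)
    also have "\<dots> = 36 * m / (\<tau> - s)^2 * N^2" unfolding q_def by (simp add: power2_eq_square)
    finally show ?thesis .
  qed
  then show ?thesis unfolding m_def by (rule exp_neg_one_plus_conv_dist_le_partial)
qed

lemma exp_neg_one_plus_conv_dist_le_image:
  assumes ux: "u x \<in> Es \<tau>"
  shows "\<exists>y. exp_conv Es nm s (\<lambda>z. - u z) (x + u x) y \<and> nm s (y - x) \<le> 2 * nm \<tau> (u x) / (\<tau> - s) * N"
proof -
  define q where "q = 3 * N / (\<tau> - s)"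
  define M where "M = nm \<tau> (u x)"
  have q: "0 \<le> q" "q \<le> 1/2" and M: "0 \<le> M"
    unfolding q_def M_def using ratio_nonneg small norm_tau_nonneg[OF ux] by auto
  \<comment> \<open>Only \<open>|u x|_\<tau>\<close> is controlled, so \<open>u^(i+2) x\<close> is read as \<open>u^(i+1) (u x)\<close>; this suffices
    because the \<open>u x\<close> term of the telescoped sum has coefficient \<open>0\<close>.\<close>
  have d: "nm s ((u ^^ Suc (Suc i)) x) / fact (Suc i) \<le> q ^ Suc i / 3 * M" for i
    using iterate_over_fact_le[OF s_pos s_less ux, of "Suc i"] unfolding q_def M_def
    by (simp only: funpow_Suc_right comp_def)
  have "(\<Sum>i<n. real i * (nm s ((u ^^ Suc i) x) / fact (Suc i)))
      + real (Suc n) * (nm s ((u ^^ Suc n) x) / fact (Suc n)) \<le> 2 * M / (\<tau> - s) * N"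
    if n: "1 \<le> n" for n
  proof -
    obtain r where r: "n = Suc r" using n by (cases n) auto
    have shift: "real (Suc i) * (a / fact (Suc (Suc i))) \<le> a / fact (Suc i)" if "0 \<le> a" for a :: real and i
    proof -
      have "real (Suc i) * (a / fact (Suc (Suc i))) = real (Suc i) / real (Suc (Suc i)) * (a / fact (Suc i))"
        by (subst fact_Suc[of "Suc i"]) (simp add: field_simps del: fact_Suc of_nat_Suc)
      also have "\<dots> \<le> 1 * (a / fact (Suc i))" using that by (intro mult_right_mono) auto
      finally show ?thesis by simp
    qed
    have "(\<Sum>i<n. real i * (nm s ((u ^^ Suc i) x) / fact (Suc i)))
        = (\<Sum>i<r. real (Suc i) * (nm s ((u ^^ Suc (Suc i)) x) / fact (Suc (Suc i))))"
      unfolding r sum.lessThan_Suc_shift by simp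
    also have "\<dots> \<le> (\<Sum>i<r. q ^ Suc i / 3 * M)"
      using d shift complete_normed_subspace.nonneg[OF s_level iterate_mem[OF x_mem]]
      by (intro sum_mono) (meson order_trans)
    finally have "(\<Sum>i<n. real i * (nm s ((u ^^ Suc i) x) / fact (Suc i))) \<le> (\<Sum>i<r. q ^ Suc i / 3 * M)" .
    moreover have "real (Suc n) * (nm s ((u ^^ Suc n) x) / fact (Suc n)) \<le> q ^ Suc r / 3 * M"
      using d[of r] unfolding r by (subst fact_Suc[of "Suc r"]) (simp del: fact_Suc funpow.simps)
    ultimately have "(\<Sum>i<n. real i * (nm s ((u ^^ Suc i) x) / fact (Suc i)))
        + real (Suc n) * (nm s ((u ^^ Suc n) x) / fact (Suc n))
        \<le> (\<Sum>i<r. q ^ Suc i / 3 * M) + q ^ Suc r / 3 * M"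
      by (rule add_mono)
    also have "\<dots> = q * M / 3 * (\<Sum>i<Suc r. q ^ i)"
      by (simp add: sum_distrib_left sum_distrib_right sum_divide_distrib algebra_simps)
    also have "\<dots> \<le> q * M / 3 * 2"
      by (rule mult_left_mono[OF geometric_sum_le_two[OF q]]) (use q M in simp)
    also have "\<dots> = 2 * M / (\<tau> - s) * N" using s_less unfolding q_def by (simp add: field_simps)
    finally show ?thesis .
  qed
  then show ?thesis unfolding M_def by (rule exp_neg_one_plus_conv_dist_le_partial)
qed

end

end

theorem mainTheorem9:
  fixes S \<tau> s :: real and Es :: "real \<Rightarrow> 'a::real_vector set" and nm :: "real \<Rightarrow> 'a \<Rightarrow> real"
    and u :: "'a \<Rightarrow> 'a" and x :: 'a
  assumes "scaled_space S Es nm"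
    and "0 < \<tau>" and "\<tau> < S"
    and "tau_morphism S Es nm \<tau> u"
    and "one_bounded Es nm \<tau> u"
    and "0 < s" and "s < \<tau>"
    and "3 * N1 Es nm \<tau> u / (\<tau> - s) \<le> 1 / 2"
    and "x \<in> Es \<tau>"
  shows "(\<exists>y. exp_conv Es nm s (\<lambda>z. - u z) (x + u x) y \<and>
            nm s (y - x) \<le> 36 * nm \<tau> x / (\<tau> - s)^2 * (N1 Es nm \<tau> u)^2)
       \<and> (u x \<in> Es \<tau> \<longrightarrow> (\<exists>y. exp_conv Es nm s (\<lambda>z. - u z) (x + u x) y \<and>
            nm s (y - x) \<le> 2 * nm \<tau> (u x) / (\<tau> - s) * N1 Es nm \<tau> u))
       \<and> (\<exists>y. exp_conv Es nm s (\<lambda>z. - u z) x y \<and>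
            nm s (y - x) \<le> 6 * nm \<tau> x / (\<tau> - s) * N1 Es nm \<tau> u)
       \<and> (u x \<in> Es \<tau> \<longrightarrow> (\<exists>y. exp_conv Es nm s (\<lambda>z. - u z) x y \<and>
            nm s (y - x) \<le> 2 * nm \<tau> (u x)))
       \<and> (\<exists>y. exp_conv Es nm s u x y \<and> nm s y \<le> 2 * nm \<tau> x)"
proof -
  interpret one_bounded_morphism S \<tau> Es nm u "N1 Es nm \<tau> u"
    using assms(1-4) one_bound_const_N1[OF assms(5)] by unfold_locales
  note hyps = assms(6-9)
  show ?thesis
    using exp_neg_one_plus_conv_dist_le[OF hyps] exp_neg_one_plus_conv_dist_le_image[OF hyps]
      exp_neg_conv_dist_le[OF hyps] exp_neg_conv_dist_le_image[OF hyps] exp_conv_norm_le[OF hyps]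
    by blast
qed

end
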